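(* The following identities hold: (i) $M(1;2;1;x)\cdot M(1;2;1;-x)=1$ as formal power series in $x$; (ii) $M(0;2;1;x)=-M(0;2;1;-x)$ as formal power series in $x$; (iii) for complex $|x|<1$ the series $M(0;2;1;x)$ converges and equals $\operatorname{arsinh}(x)$ (principal branch, $\operatorname{arsinh}(0)=0$).
   Context: For $m,a,b\in\mathbb{C}$ the master series is the power series $M(m;a;b;x)=m+x+\sum_{\ell\ge 2}\frac{x^\ell}{\ell!}\prod_{\gamma=1}^{\ell-1}(m-a\gamma+b\ell)$. *)

theory Defs
  imports "HOL-Complex_Analysis.Complex_Analysis" "HOL-Computational_Algebra.Formal_Power_Series"
begin

definition master_coeff :: "complex \<Rightarrow> complex \<Rightarrow> complex \<Rightarrow> nat \<Rightarrow> complex" where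
  "master_coeff m a b l =
     (if l = 0 then m
      else if l = 1 then 1
      else (\<Prod>g = 1..l - 1. m - a * of_nat g + b * of_nat l) / fact l)"

definition master :: "complex \<Rightarrow> complex \<Rightarrow> complex \<Rightarrow> complex fps" where
  "master m a b = Abs_fps (master_coeff m a b)"

end

theory Submission
  imports Defs "HOL-Computational_Algebra.Formal_Laurent_Series"
begin

(* Both specialisations have half-integer products as coefficients:
   for m + l = 2k + 1 the product in the l-th coefficient of M(m;2;1;x) is
   2^(l-1) prod_{g=1}^{l-1} (k + 1/2 - g), a product of two Pochhammer symbols (1/2)_j.
   Evaluating it shows that M(1;2;1;x) = x + sqrt(1 + x^2), whence
   M(x) M(-x) = (sqrt(1 + x^2) + x) (sqrt(1 + x^2) - x) = 1, and that M(0;2;1;x) is odd with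
   derivative (1 + x^2)^(-1/2).  The coefficients of M(0;2;1;x) are bounded by 1, so on the unit
   disc its sum and arsinh have the same derivative and agree at 0. *)

lemma pochhammer_half_neq_0 [simp]: "pochhammer (1/2) k \<noteq> (0::'a::field_char_0)"
proof
  assume "pochhammer (1/2) k = (0::'a)"
  then obtain j where "(1/2::'a) = - of_nat j"
    by (auto simp: pochhammer_eq_0_iff)
  then have "(of_nat (2*j+1) :: 'a) = 0"
    by (simp add: field_simps) algebra
  then show False
    by (simp only: of_nat_eq_0_iff)
qed

lemma prod_half_integers_eq_pochhammer:
  fixes k n :: nat
  assumes "k \<le> n"
  shows "(\<Prod>g=1..n. of_nat k + 1/2 - of_nat g :: 'a::field_char_0) =
           (-1)^(n-k) * pochhammer (1/2) k * pochhammer (1/2) (n-k)"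
  using assms
proof (induction n rule: dec_induct)
  case base
  have "(\<Prod>g=1..k. of_nat k + 1/2 - of_nat g :: 'a) = (\<Prod>g=1..k. 1/2 + of_nat (k - g))"
    by (intro prod.cong) auto
  then show ?case by (simp add: pochhammer_prod_rev)
next
  case (step n)
  have "of_nat k + 1/2 - of_nat (Suc n) = - (1/2 + of_nat (n - k) :: 'a)"
    using step.hyps by simp
  moreover have "Suc n - k = Suc (n - k)" using step.hyps by simp
  ultimately show ?case
    using step.IH by (simp add: pochhammer_rec' algebra_simps)
qed

lemma master_coeff_eq_0:
  assumes "1 \<le> g" "g < l" "m - a * of_nat g + b * of_nat l = 0"
  shows "master_coeff m a b l = 0"
  using assms by (auto simp: master_coeff_def intro!: prod_zero bexI[of _ g])

lemma master_coeff_2_1_odd_sum: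
  assumes "m + of_nat l = of_nat (2*k+1)" "2 \<le> l"
  shows "master_coeff m 2 1 l = 2^(l-1) * (\<Prod>g=1..l-1. of_nat k + 1/2 - of_nat g) / fact l"
proof -
  from assms(1) have m: "m = 2 * of_nat k + 1 - of_nat l"
    by (simp add: eq_diff_eq)
  have "(\<Prod>g=1..l-1. m - 2 * of_nat g + 1 * of_nat l) =
      (\<Prod>g=1..l-1. 2 * (of_nat k + 1/2 - of_nat g))"
    by (intro prod.cong) (simp_all add: m algebra_simps)
  also have "\<dots> = 2^(l-1) * (\<Prod>g=1..l-1. of_nat k + 1/2 - of_nat g)"
    by (simp only: prod.distrib prod_constant card_atLeastAtMost) simp
  finally show ?thesis using assms(2) by (simp add: master_coeff_def)
qed

lemma master_coeff_0_2_1_odd: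
  "of_nat (2*k+1) * master_coeff 0 2 1 (2*k+1) = (-1/2) gchoose k"
proof (cases "k = 0")
  case True then show ?thesis by (simp add: master_coeff_def)
next
  case False
  have "master_coeff 0 2 1 (2*k+1) =
      2^(2*k) * ((-1)^k * pochhammer (1/2) k * pochhammer (1/2) k) / fact (2*k+1)"
    using False prod_half_integers_eq_pochhammer[of k "2*k", where 'a=complex]
    by (simp add: master_coeff_2_1_odd_sum)
  also have "fact (2*k+1) = (of_nat (2*k+1) :: complex) * fact (2*k)"
    by simp
  also have "fact (2*k) = (2^(2*k) * pochhammer (1/2) k * fact k :: complex)"
    by (rule fact_double)
  finally have "master_coeff 0 2 1 (2*k+1) =
      (-1)^k * pochhammer (1/2) k / (of_nat (2*k+1) * fact k)"
    by simp
  moreover have "(of_nat (2*k+1) :: complex) \<noteq> 0"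
    by (simp only: of_nat_eq_0_iff)
  ultimately show ?thesis by (simp add: gbinomial_pochhammer)
qed

lemma master_coeff_1_2_1_even:
  assumes "k \<ge> 1"
  shows "master_coeff 1 2 1 (2*k) = (1/2) gchoose k"
proof -
  have "master_coeff 1 2 1 (2*k) =
      2^(2*k-1) * (\<Prod>g=1..2*k-1. of_nat k + 1/2 - of_nat g) / fact (2*k)"
    by (rule master_coeff_2_1_odd_sum) (use assms in simp_all)
  also have "(\<Prod>g=1..2*k-1. of_nat k + 1/2 - of_nat g :: complex) =
      (-1)^(k-1) * pochhammer (1/2) k * pochhammer (1/2) (k-1)"
    using prod_half_integers_eq_pochhammer[of k "2*k-1", where 'a=complex] assms by simp
  also have "fact (2*k) = (2^(2*k) * pochhammer (1/2) k * fact k :: complex)"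
    by (rule fact_double)
  finally have "master_coeff 1 2 1 (2*k) = (-1)^(k-1) * pochhammer (1/2) (k-1) / (2 * fact k)"
    using assms by (simp add: power_diff)
  moreover obtain j where "k = Suc j" using assms by (cases k) auto
  ultimately show ?thesis
    by (simp add: gbinomial_pochhammer pochhammer_rec)
qed

lemma master_1_2_1_eq_binomial: "master 1 2 1 = fps_X + (fps_binomial (1/2) oo fps_X^2)"
proof (rule fps_ext)
  fix n :: nat
  have "n = 0 \<or> n = 1 \<or> (\<exists>k\<ge>1. n = 2*k) \<or> (\<exists>k\<ge>1. n = 2*k+1)"
    by presburger
  then consider "n = 0" | "n = 1" | k where "k \<ge> 1" "n = 2*k" | k where "k \<ge> 1" "n = 2*k+1"
    by blast
  then show "fps_nth (master 1 2 1) n = fps_nth (fps_X + (fps_binomial (1/2) oo fps_X^2)) n"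
  proof cases
    case (3 k)
    then show ?thesis by (simp add: master_def fps_nth_compose_X_power master_coeff_1_2_1_even)
  next
    case (4 k)
    then have "master_coeff 1 2 1 n = 0"
      by (intro master_coeff_eq_0[of "k+1"]) auto
    with 4 show ?thesis by (simp add: master_def fps_nth_compose_X_power)
  qed (simp_all add: master_def master_coeff_def fps_nth_compose_X_power)
qed

lemma master_0_2_1_even_coeff: "fps_nth (master 0 2 1) (2*k) = 0"
proof (cases "k = 0")
  case False
  then show ?thesis by (simp add: master_def master_coeff_eq_0[of k])
qed (simp add: master_def master_coeff_def)

lemma fps_deriv_master_0_2_1: "fps_deriv (master 0 2 1) = fps_binomial (-1/2) oo fps_X^2"
proof (rule fps_ext)
  fix n :: nat
  show "fps_nth (fps_deriv (master 0 2 1)) n = fps_nth (fps_binomial (-1/2) oo fps_X^2) n"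
  proof (cases "even n")
    case True
    then obtain k where "n = 2*k" by blast
    then show ?thesis
      using master_coeff_0_2_1_odd[of k] by (simp add: master_def fps_nth_compose_X_power)
  next
    case False
    then obtain k where "n + 1 = 2*(k+1)" by (auto elim!: oddE)
    then show ?thesis
      using False master_0_2_1_even_coeff[of "k+1"] by (simp add: fps_nth_compose_X_power)
  qed
qed

lemma fps_compose_X_squared_uminus:
  "(f oo fps_X^2) oo (- fps_X) = (f oo fps_X^2 :: 'a::comm_ring_1 fps)"
  by (rule fps_ext) (simp add: fps_compose_uminus' fps_nth_compose_X_power)

lemma fps_binomial_half_compose_square:
  "(fps_binomial (1/2) oo fps_X^2)^2 = (1 + fps_X^2 :: 'a::field_char_0 fps)"
proof -
  have "(fps_binomial (1/2) oo fps_X^2)^2 =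
      (fps_binomial (1/2) * fps_binomial (1/2) oo fps_X^2 :: 'a fps)"
    by (simp add: power2_eq_square fps_compose_mult_distrib)
  also have "fps_binomial (1/2) * fps_binomial (1/2) = (fps_binomial 1 :: 'a fps)"
    by (simp flip: fps_binomial_add_mult)
  finally show ?thesis
    by (simp add: fps_binomial_1 fps_compose_add_distrib)
qed

lemma master_1_2_1_mult_reflection: "master 1 2 1 * (master 1 2 1 oo (- fps_X)) = 1"
proof -
  define S :: "complex fps" where "S = fps_binomial (1/2) oo fps_X^2"
  have M: "master 1 2 1 = fps_X + S"
    by (simp add: master_1_2_1_eq_binomial S_def)
  have R: "master 1 2 1 oo (- fps_X) = S - fps_X"
    unfolding M S_def by (simp add: fps_compose_add_distrib fps_compose_X_squared_uminus)
  have "master 1 2 1 * (master 1 2 1 oo (- fps_X)) = S^2 - fps_X^2"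
    unfolding R by (simp add: M algebra_simps power2_eq_square)
  then show ?thesis
    by (simp add: S_def fps_binomial_half_compose_square)
qed

lemma master_0_2_1_odd: "master 0 2 1 = - (master 0 2 1 oo (- fps_X))"
proof (rule fps_ext)
  fix n :: nat
  show "fps_nth (master 0 2 1) n = fps_nth (- (master 0 2 1 oo (- fps_X))) n"
    using master_0_2_1_even_coeff[of "n div 2"] by (cases "even n") (auto simp: fps_compose_uminus')
qed

lemma sums_fps_compose_X_power:
  fixes f :: "'a::real_normed_field fps"
  assumes "0 < m" "(\<lambda>n. fps_nth f n * (z^m)^n) sums s"
  shows "(\<lambda>n. fps_nth (f oo fps_X^m) n * z^n) sums s"
proof -
  have "(\<lambda>n. fps_nth (f oo fps_X^m) (m*n) * z^(m*n)) sums s"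
    using assms by (simp add: fps_nth_compose_X_power power_mult)
  moreover have "strict_mono (\<lambda>n. m*n)"
    using assms(1) by (simp add: strict_mono_def)
  ultimately show ?thesis
    by (subst (asm) sums_mono_reindex) (auto simp: fps_nth_compose_X_power)
qed

lemma norm_gbinomial_minus_half_le: "norm ((-1/2) gchoose k :: complex) \<le> 1"
proof -
  have "norm (-1/2 - of_nat i :: complex) = 1/2 + real i" for i
  proof -
    have "-1/2 - of_nat i = - complex_of_real (1/2 + real i)"
      by simp
    then show ?thesis
      by (simp only: norm_minus_cancel norm_of_real)
  qed
  then have "norm (\<Prod>i<k. -1/2 - of_nat i :: complex) = (\<Prod>i<k. 1/2 + real i)"
    by (simp flip: prod_norm)
  also have "\<dots> \<le> (\<Prod>i<k. real (Suc i))"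
    by (rule prod_mono) auto
  also have "\<dots> = fact k"
    by (simp add: fact_prod_Suc atLeast0LessThan)
  finally show ?thesis
    by (simp add: gbinomial_prod_rev atLeast0LessThan norm_divide)
qed

lemma norm_master_0_2_1_coeff_le: "norm (fps_nth (master 0 2 1) n) \<le> 1"
proof (cases "even n")
  case True
  then obtain k where "n = 2*k" by blast
  then show ?thesis by (simp add: master_0_2_1_even_coeff)
next
  case False
  then obtain k where n: "n = 2*k+1" by (blast elim: oddE)
  have "(of_nat (2*k+1) :: complex) \<noteq> 0"
    by (simp only: of_nat_eq_0_iff)
  then have "fps_nth (master 0 2 1) n = ((-1/2) gchoose k) / of_nat (2*k+1)"
    using master_coeff_0_2_1_odd[of k] by (simp add: master_def n field_simps)
  also have "norm \<dots> \<le> norm ((-1/2) gchoose k :: complex)"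
    by (simp only: norm_divide norm_of_nat) (simp add: divide_le_eq mult_le_cancel_left1)
  also have "\<dots> \<le> 1"
    by (rule norm_gbinomial_minus_half_le)
  finally show ?thesis .
qed

lemma conv_radius_ge_1_if_bounded:
  fixes f :: "nat \<Rightarrow> 'a::{banach, real_normed_div_algebra}"
  assumes "\<And>n. norm (f n) \<le> C"
  shows "1 \<le> conv_radius f"
proof (rule conv_radius_geI_ex')
  fix r :: real
  assume r: "0 < r" "ereal r < 1"
  show "summable (\<lambda>n. f n * of_real r ^ n)"
  proof (rule summable_comparison_test')
    show "summable (\<lambda>n. C * r ^ n)"
      using r by (intro summable_mult summable_geometric) auto
    show "norm (f n * of_real r ^ n) \<le> C * r ^ n" for n
      using r assms[of n] by (simp add: norm_mult norm_power mult_right_mono)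
  qed
qed

lemma fps_conv_radius_master_0_2_1: "1 \<le> fps_conv_radius (master 0 2 1)"
  unfolding fps_conv_radius_def
  by (rule conv_radius_ge_1_if_bounded) (rule norm_master_0_2_1_coeff_le)

lemma arsinh_complex_altdef: "arsinh z = Ln (z + csqrt (z^2 + 1))"
  by (simp add: arsinh_def csqrt_conv_powr)

lemma arsinh_Ln_arg_notin_nonpos_Reals: "z + csqrt (z^2 + 1) \<notin> \<real>\<^sub>\<le>\<^sub>0"
proof
  define s where "s = csqrt (z^2 + 1)"
  assume "z + s \<in> \<real>\<^sub>\<le>\<^sub>0"
  then obtain t where t: "z + s = of_real t" "t \<le> 0"
    by (auto simp: s_def elim!: nonpos_Reals_cases)
  have "s * s = z * z + 1"
    using power2_csqrt[of "z^2 + 1"] by (simp add: s_def power2_eq_square)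
  then have product: "(z + s) * (s - z) = 1"
    by (simp add: algebra_simps)
  then have "t \<noteq> 0" using t by auto
  with t product have "s - z = of_real (1/t)"
    by (simp add: field_simps)
  have "2 * s = (z + s) + (s - z)"
    by simp
  also have "\<dots> = of_real (t + 1/t)"
    using t \<open>s - z = of_real (1/t)\<close> by simp
  finally have "Re (2 * s) = t + 1/t"
    by simp
  then have "Re s = (t + 1/t) / 2"
    by simp
  also have "\<dots> < 0"
    using \<open>t \<le> 0\<close> \<open>t \<noteq> 0\<close> by (simp add: add_neg_neg)
  finally show False
    using Re_csqrt[of "z^2 + 1"] by (simp add: s_def)
qed

lemma has_field_derivative_arsinh_complex:
  assumes "z^2 + 1 \<notin> \<real>\<^sub>\<le>\<^sub>0"
  shows "(arsinh has_field_derivative inverse (csqrt (z^2 + 1))) (at z)"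
proof -
  define s where "s = csqrt (z^2 + 1)"
  have "s \<noteq> 0"
    using assms by (auto simp: s_def)
  have "z + s \<noteq> 0"
    using arsinh_Ln_arg_notin_nonpos_Reals[of z] by (auto simp: s_def)
  have "((\<lambda>z. Ln (z + csqrt (z^2 + 1))) has_field_derivative
           inverse (z + s) * (1 + z / s)) (at z)"
    using assms arsinh_Ln_arg_notin_nonpos_Reals[of z] unfolding s_def
    by (auto intro!: derivative_eq_intros)
  also have "inverse (z + s) * (1 + z / s) = inverse s"
    using \<open>s \<noteq> 0\<close> \<open>z + s \<noteq> 0\<close> by (simp add: field_simps)
  finally show ?thesis
    by (simp add: s_def arsinh_complex_altdef[abs_def])
qed

lemma master_0_2_1_sums_arsinh:
  fixes x :: complex
  assumes "norm x < 1"
  shows "(\<lambda>n. fps_nth (master 0 2 1) n * x^n) sums arsinh x"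
proof -
  define A where "A = master 0 2 1"
  have radius: "norm z < fps_conv_radius A" if "z \<in> ball 0 1" for z
  proof -
    have "ereal (norm z) < 1"
      using that by simp
    then show ?thesis
      using fps_conv_radius_master_0_2_1 unfolding A_def by (rule order.strict_trans2)
  qed
  have deriv_zero:
    "((\<lambda>z. eval_fps A z - arsinh z) has_field_derivative 0) (at z within ball 0 1)"
    if z: "z \<in> ball 0 1" for z
  proof -
    have "norm (z^2) < 1"
      using z by (simp add: norm_power power_less_one_iff)
    then have "Re (z^2 + 1) > 0"
      using abs_Re_le_cmod[of "z^2"] by simp
    then have not_nonpos: "z^2 + 1 \<notin> \<real>\<^sub>\<le>\<^sub>0"
      by (simp add: complex_nonpos_Reals_iff)
    have "(\<lambda>n. fps_nth (fps_binomial (-1/2)) n * (z^2)^n) sums (1 + z^2) powr (-1/2)"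
      using gen_binomial_complex[OF \<open>norm (z^2) < 1\<close>] by simp
    then have "(\<lambda>n. fps_nth (fps_deriv A) n * z^n) sums (1 + z^2) powr (-1/2)"
      unfolding A_def fps_deriv_master_0_2_1 by (rule sums_fps_compose_X_power[rotated]) simp
    then have "eval_fps (fps_deriv A) z = inverse (csqrt (z^2 + 1))"
      by (simp add: eval_fps_def sums_iff csqrt_conv_powr powr_minus add.commute)
    then have "(eval_fps A has_field_derivative inverse (csqrt (z^2 + 1))) (at z)"
      using has_field_derivative_eval_fps[OF radius[OF z], where A=UNIV] by simp
    from DERIV_diff[OF this has_field_derivative_arsinh_complex[OF not_nonpos]]
    show ?thesis
      by (simp add: has_field_derivative_at_within)
  qed
  obtain c where c: "\<forall>z\<in>ball 0 1. eval_fps A z - arsinh z = c"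
    using has_field_derivative_zero_constant[OF convex_ball deriv_zero] by blast
  have "c = 0"
    using c[rule_format, of 0] by (simp add: eval_fps_at_0 A_def master_def master_coeff_def)
  have x: "x \<in> ball 0 1"
    using assms by simp
  with c \<open>c = 0\<close> have "eval_fps A x = arsinh x"
    by (metis eq_iff_diff_eq_0)
  with sums_eval_fps[OF radius[OF x]] show ?thesis
    unfolding A_def by (rule back_subst)
qed

theorem mainTheorem7:
  shows "master 1 2 1 * (master 1 2 1 oo (- fps_X)) = 1 \<and>
         master 0 2 1 = - (master 0 2 1 oo (- fps_X)) \<and>
         (\<forall>x::complex. norm x < 1 \<longrightarrow>
           (\<lambda>n. fps_nth (master 0 2 1) n * x ^ n) sums arsinh x)"
  using master_1_2_1_mult_reflection master_0_2_1_odd master_0_2_1_sums_arsinh by blast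

end
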